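(* Let $\Gamma_1$ be the path graph with vertices $a,b,c,d$ and edges $\{a,b\},\{b,c\},\{c,d\}$. Then $\vdash_{\Gamma_1} a,c\rhd d\rightarrow (d,b\rhd a\rightarrow b,c\rhd a,d)$.
   Context: For a finite simple undirected graph $\Gamma=(V,E)$, the border of $U\subseteq V$ is ${\cal B}(U)=\{v\in U\mid (v,w)\in E\text{ for some }w\in V\setminus U\}$, and a cut $(U,W)$ is a partition $V=U\sqcup W$. Formulas are built from $\bot$, atoms $A\rhd B$ ($A,B\subseteq V$) and $\rightarrow$; $A,B$ denotes $A\cup B$ and a vertex $v$ stands for $\{v\}$. $\vdash_\Gamma\phi$ means $\phi$ is derivable by Modus Ponens from propositional tautologies and the axioms: Reflexivity $A\rhd B$ for $B\subseteq A$; Augmentation $A\rhd B\rightarrow A,C\rhd B,C$; Transitivity $A\rhd B\rightarrow(B\rhd C\rightarrow A\rhd C)$; Contiguity $A,B\rhd C\rightarrow{\cal B}(U),{\cal B}(W),B\rhd C$ for every cut $(U,W)$ of $\Gamma$ with $A\subseteq U$, $C\subseteq W$. *)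

theory Defs
  imports Main
begin

datatype 'v form =
    Bot
  | Atom "'v set" "'v set"   (infix "\<rhd>" 60)
  | Imp "'v form" "'v form"  (infixr "\<^bold>\<rightarrow>" 55)

fun eval :: "('v set \<Rightarrow> 'v set \<Rightarrow> bool) \<Rightarrow> 'v form \<Rightarrow> bool" where
  "eval I Bot = False"
| "eval I (Atom A B) = I A B"
| "eval I (Imp p q) = (eval I p \<longrightarrow> eval I q)"

definition tautology :: "'v form \<Rightarrow> bool" where
  "tautology \<phi> \<longleftrightarrow> (\<forall>I. eval I \<phi>)"

definition simple_graph :: "'v set \<Rightarrow> ('v \<times> 'v) set \<Rightarrow> bool" where
  "simple_graph V E \<longleftrightarrow> finite V \<and> E \<subseteq> V \<times> V \<and> sym E \<and> irrefl E"

definition border :: "'v set \<Rightarrow> ('v \<times> 'v) set \<Rightarrow> 'v set \<Rightarrow> 'v set" where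
  "border V E U = {v \<in> U. \<exists>w \<in> V - U. (v, w) \<in> E}"

inductive derivable :: "'v set \<Rightarrow> ('v \<times> 'v) set \<Rightarrow> 'v form \<Rightarrow> bool" for V E where
  taut: "tautology \<phi> \<Longrightarrow> derivable V E \<phi>"
| mp: "derivable V E \<phi> \<Longrightarrow> derivable V E (\<phi> \<^bold>\<rightarrow> \<psi>) \<Longrightarrow> derivable V E \<psi>"
| refl: "B \<subseteq> A \<Longrightarrow> derivable V E (A \<rhd> B)"
| augment: "derivable V E ((A \<rhd> B) \<^bold>\<rightarrow> (A \<union> C \<rhd> B \<union> C))"
| trans: "derivable V E ((A \<rhd> B) \<^bold>\<rightarrow> ((B \<rhd> C) \<^bold>\<rightarrow> (A \<rhd> C)))"
| contiguity: "U \<subseteq> V \<Longrightarrow> W = V - U \<Longrightarrow> A \<subseteq> U \<Longrightarrow> C \<subseteq> W \<Longrightarrow>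
    derivable V E ((A \<union> B \<rhd> C) \<^bold>\<rightarrow> (border V E U \<union> border V E W \<union> B \<rhd> C))"

datatype vtx = a | b | c | d

definition path_V :: "vtx set" where
  "path_V = {a, b, c, d}"

definition path_E :: "(vtx \<times> vtx) set" where
  "path_E = {(a, b), (b, a), (b, c), (c, b), (c, d), (d, c)}"

end

theory Submission
  imports Defs
begin

text \<open>The cut of the path into a, b and c, d has borders b and c. Contiguity along this cut
  turns a, c \<rhd> d into b, c \<rhd> d and, with the sides exchanged, d, b \<rhd> a into b, c \<rhd> a.
  The Armstrong union rule, derived from augmentation, reflexivity and transitivity, combines the
  two into b, c \<rhd> a, d.\<close>

lemma derivable_mp_list:
  assumes "derivable V E (foldr (\<^bold>\<rightarrow>) ps q)" and "\<And>p. p \<in> set ps \<Longrightarrow> derivable V E p"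
  shows "derivable V E q"
  using assms
proof (induction ps)
  case (Cons p ps)
  have "derivable V E (p \<^bold>\<rightarrow> foldr (\<^bold>\<rightarrow>) ps q)" and "derivable V E p"
    using Cons.prems by simp_all
  then have "derivable V E (foldr (\<^bold>\<rightarrow>) ps q)" by (rule mp[rotated])
  with Cons show ?case by simp
qed simp

lemma derivable_by_tautology:
  assumes "tautology (foldr (\<^bold>\<rightarrow>) ps q)" and "\<And>p. p \<in> set ps \<Longrightarrow> derivable V E p"
  shows "derivable V E q"
  using derivable_mp_list[OF taut[OF assms(1)] assms(2)] .

lemma derivable_weaken_right:
  assumes "B' \<subseteq> A \<union> B"
  shows "derivable V E ((A \<rhd> B) \<^bold>\<rightarrow> (A \<rhd> B'))"
proof -
  have augment_self: "derivable V E ((A \<rhd> B) \<^bold>\<rightarrow> (A \<rhd> B \<union> A))"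
    using augment[of V E A B A] by simp
  have refl_B': "derivable V E (B \<union> A \<rhd> B')"
    using assms by (intro refl) blast
  show ?thesis
    by (rule derivable_by_tautology[where ps =
          "[(A \<rhd> B) \<^bold>\<rightarrow> (A \<rhd> B \<union> A), B \<union> A \<rhd> B',
            (A \<rhd> B \<union> A) \<^bold>\<rightarrow> (B \<union> A \<rhd> B') \<^bold>\<rightarrow> (A \<rhd> B')]"])
       (use augment_self refl_B' trans[of V E A "B \<union> A" B'] in \<open>auto simp: tautology_def\<close>)
qed

lemma derivable_union_right:
  "derivable V E ((A \<rhd> B) \<^bold>\<rightarrow> (A \<rhd> C) \<^bold>\<rightarrow> (A \<rhd> B \<union> C))"
proof -
  let ?AB = "B \<union> A" and ?ABC = "C \<union> (B \<union> A)"
  have augment_B: "derivable V E ((A \<rhd> B) \<^bold>\<rightarrow> (A \<rhd> ?AB))"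
    using augment[of V E A B A] by simp
  have augment_C: "derivable V E ((A \<rhd> C) \<^bold>\<rightarrow> (?AB \<rhd> ?ABC))"
  proof -
    have "A \<union> ?AB = ?AB" by blast
    then show ?thesis using augment[of V E A C ?AB] by simp
  qed
  have weaken: "derivable V E ((A \<rhd> ?ABC) \<^bold>\<rightarrow> (A \<rhd> B \<union> C))"
    by (rule derivable_weaken_right) blast
  show ?thesis
    by (rule derivable_by_tautology[where ps =
          "[(A \<rhd> B) \<^bold>\<rightarrow> (A \<rhd> ?AB), (A \<rhd> C) \<^bold>\<rightarrow> (?AB \<rhd> ?ABC),
            (A \<rhd> ?AB) \<^bold>\<rightarrow> (?AB \<rhd> ?ABC) \<^bold>\<rightarrow> (A \<rhd> ?ABC), (A \<rhd> ?ABC) \<^bold>\<rightarrow> (A \<rhd> B \<union> C)]"])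
       (use augment_B augment_C trans[of V E A ?AB ?ABC] weaken in \<open>auto simp: tautology_def\<close>)
qed

lemma path_border_ab: "border path_V path_E {a, b} = {b}"
  by (auto simp: border_def path_V_def path_E_def)

lemma path_border_cd: "border path_V path_E {c, d} = {c}"
  by (auto simp: border_def path_V_def path_E_def)

lemma path_contiguity_ac_d: "derivable path_V path_E (({a, c} \<rhd> {d}) \<^bold>\<rightarrow> ({b, c} \<rhd> {d}))"
proof -
  have "derivable path_V path_E (({a} \<union> {c} \<rhd> {d}) \<^bold>\<rightarrow>
      (border path_V path_E {a, b} \<union> border path_V path_E {c, d} \<union> {c} \<rhd> {d}))"
    by (rule contiguity) (auto simp: path_V_def)
  then show ?thesis by (simp add: path_border_ab path_border_cd insert_commute)
qed

lemma path_contiguity_db_a: "derivable path_V path_E (({d, b} \<rhd> {a}) \<^bold>\<rightarrow> ({b, c} \<rhd> {a}))"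
proof -
  have "derivable path_V path_E (({d} \<union> {b} \<rhd> {a}) \<^bold>\<rightarrow>
      (border path_V path_E {c, d} \<union> border path_V path_E {a, b} \<union> {b} \<rhd> {a}))"
    by (rule contiguity) (auto simp: path_V_def)
  then show ?thesis by (simp add: path_border_ab path_border_cd insert_commute)
qed

theorem proposition2:
  shows "derivable path_V path_E
           (({a, c} \<rhd> {d}) \<^bold>\<rightarrow> (({d, b} \<rhd> {a}) \<^bold>\<rightarrow> ({b, c} \<rhd> {a, d})))"
proof -
  have union: "derivable path_V path_E (({b, c} \<rhd> {d}) \<^bold>\<rightarrow> ({b, c} \<rhd> {a}) \<^bold>\<rightarrow> ({b, c} \<rhd> {a, d}))"
    using derivable_union_right[of path_V path_E "{b, c}" "{d}" "{a}"] by (simp add: insert_commute)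
  show ?thesis
    by (rule derivable_by_tautology[where ps =
          "[({a, c} \<rhd> {d}) \<^bold>\<rightarrow> ({b, c} \<rhd> {d}), ({d, b} \<rhd> {a}) \<^bold>\<rightarrow> ({b, c} \<rhd> {a}),
            ({b, c} \<rhd> {d}) \<^bold>\<rightarrow> ({b, c} \<rhd> {a}) \<^bold>\<rightarrow> ({b, c} \<rhd> {a, d})]"])
       (use path_contiguity_ac_d path_contiguity_db_a union in \<open>auto simp: tautology_def\<close>)
qed

end
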